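(* Let $k\ge1$ and $B>0$ be constants and let $F:[0,1]^2\to[0,1]^2$ be as defined below. 1. If $B<2$, then $(1/2,1/2)$ is the unique fixed point of $F$, and it is Jacobian attractive. 2. If $B>2$, then the system $\exp(B\sqrt k(1-2\alpha_R))=\frac{1-\alpha_L}{\alpha_L}$, $\exp(\frac{B}{\sqrt k}(1-2\alpha_L))=\frac{1-\alpha_R}{\alpha_R}$ has exactly one solution $(\alpha_L^*,\alpha_R^* )$ with $\alpha_L^*,\alpha_R^*\in(1/2,1)$; this point is the unique fixed point of $F$, and it is Jacobian attractive.
   Context: The map $F$: for $(\alpha_L,\alpha_R)\in[0,1]^2$, if $\sqrt{\alpha_L\alpha_R}\,B\le1$ set $(\theta_L,\theta_R)=(0,0)$; otherwise let $(\theta_L,\theta_R)$ be the unique solution with $\theta_L,\theta_R>0$ of $\exp(-B\sqrt k\,\alpha_R\theta_R)=1-\theta_L$ and $\exp(-\frac{B}{\sqrt k}\alpha_L\theta_L)=1-\theta_R$. Then $F(\alpha_L,\alpha_R)=\big(\tfrac12(1+\theta_L\alpha_L),\tfrac12(1+\theta_R\alpha_R)\big)$. A fixed point is Jacobian attractive if $F$ is differentiable there and all eigenvalues of its Jacobian matrix have absolute value strictly less than $1$. *)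

theory Defs
  imports "HOL-Analysis.Analysis"
begin

definition theta :: "real \<Rightarrow> real \<Rightarrow> real \<times> real \<Rightarrow> real \<times> real" where
  "theta B k a = (let aL = fst a; aR = snd a in
     if sqrt (aL * aR) * B \<le> 1 then (0, 0)
     else (THE t. fst t > 0 \<and> snd t > 0 \<and>
                  exp (- B * sqrt k * aR * snd t) = 1 - fst t \<and>
                  exp (- (B / sqrt k) * aL * fst t) = 1 - snd t))"

definition Fmap :: "real \<Rightarrow> real \<Rightarrow> real \<times> real \<Rightarrow> real \<times> real" where
  "Fmap B k a = ((1 + fst (theta B k a) * fst a) / 2, (1 + snd (theta B k a) * snd a) / 2)"

definition unit_square :: "(real \<times> real) set" where
  "unit_square = {0..1} \<times> {0..1}"

definition fixed_points :: "(real \<times> real \<Rightarrow> real \<times> real) \<Rightarrow> (real \<times> real) set" where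
  "fixed_points f = {p \<in> unit_square. f p = p}"

definition eigenvalue2 :: "real \<Rightarrow> real \<Rightarrow> real \<Rightarrow> real \<Rightarrow> complex \<Rightarrow> bool" where
  "eigenvalue2 a b c d l \<longleftrightarrow> (\<exists>v1 v2 :: complex. (v1, v2) \<noteq> (0, 0) \<and>
      of_real a * v1 + of_real b * v2 = l * v1 \<and> of_real c * v1 + of_real d * v2 = l * v2)"

text \<open>Jacobian attractive: F differentiable at p with derivative D, whose Jacobian matrix
  [[dF_L/da_L, dF_L/da_R], [dF_R/da_L, dF_R/da_R]] has all eigenvalues of modulus < 1.\<close>
definition jacobian_attractive :: "(real \<times> real \<Rightarrow> real \<times> real) \<Rightarrow> real \<times> real \<Rightarrow> bool" where
  "jacobian_attractive f p \<longleftrightarrow> f differentiable (at p) \<and>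
     (\<exists>D. (f has_derivative D) (at p) \<and>
        (\<forall>l. eigenvalue2 (fst (D (1, 0))) (fst (D (0, 1))) (snd (D (1, 0))) (snd (D (0, 1))) l
              \<longrightarrow> cmod l < 1))"

end

theory Submission
  imports Defs
begin

text \<open>
  For fixed \<open>(\<alpha>\<^sub>L, \<alpha>\<^sub>R)\<close> the pair \<open>\<theta>\<close> is pinned down by its first component, the positive
  fixed point of \<open>x \<mapsto> 1 - exp (-a (1 - exp (-b x)))\<close> with \<open>a = B \<surd>k \<alpha>\<^sub>R\<close>, \<open>b = B \<alpha>\<^sub>L / \<surd>k\<close>;
  this map has a strictly decreasing derivative starting at \<open>ab\<close>, so the fixed point exists
  iff \<open>ab > 1\<close> and is then unique. A nontrivial fixed point of \<open>F\<close> satisfies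
  \<open>\<alpha> (2 - \<theta>) = 1\<close>, which turns the equations for \<open>\<theta>\<close> into the system of the statement.
  The bounds \<open>2t/(2-t) < -ln (1-t) < t(2-t)/(2(1-t))\<close> give \<open>4 < ab(2-x)(2-y)\<close> and
  \<open>4ab(1-x)(1-y) < (2-x)(2-y)\<close> for every solution \<open>(x, y)\<close>: the first forces \<open>B > 2\<close> at a
  nontrivial fixed point, and the second is exactly the Jury condition for the Jacobian of
  \<open>F\<close>, whose trace and determinant are \<open>(x+y)s/2\<close> and \<open>xys/4\<close> with
  \<open>s = 1/(1 - ab(1-x)(1-y))\<close>; this Jacobian is obtained by inverting the explicit inverse
  map \<open>\<theta> \<mapsto> \<alpha>\<close>. Existence and uniqueness of the nontrivial fixed point for \<open>B > 2\<close>
  follow as before after the substitution \<open>u = 2\<alpha>\<^sub>L - 1\<close>, which makes the system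
  \<open>u = tanh (c tanh (d u))\<close> with \<open>cd = B\<^sup>2/4\<close>.
\<close>

section \<open>Elementary real analysis\<close>

lemma ln_less_minus_one: "0 < x \<Longrightarrow> x \<noteq> 1 \<Longrightarrow> ln x < x - 1" for x :: real
  using ln_le_minus_one[of x] ln_eq_minus_one[of x] by fastforce

lemma DERIV_pos_interior_imp_increasing:
  fixes f f' :: "real \<Rightarrow> real"
  assumes "a < b"
    and "\<And>x. a \<le> x \<Longrightarrow> x \<le> b \<Longrightarrow> (f has_real_derivative f' x) (at x)"
    and "\<And>x. a < x \<Longrightarrow> x < b \<Longrightarrow> 0 < f' x"
  shows "f a < f b"
proof (rule DERIV_pos_imp_increasing_open[OF \<open>a < b\<close>])
  show "\<exists>y. (f has_real_derivative y) (at x) \<and> 0 < y" if "a < x" "x < b" for x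
    using assms(2,3)[of x] that by auto
  show "continuous_on {a..b} f"
    using assms(2) by (blast intro: DERIV_atLeastAtMost_imp_continuous_on)
qed

lemma minus_ln_one_minus_gt:
  fixes t :: real
  assumes "0 < t" "t < 1"
  shows "2 * t / (2 - t) < - ln (1 - t)"
proof -
  define f where "f x = - (2 - x) * ln (1 - x) - 2 * x" for x :: real
  have der: "(f has_real_derivative ln (1 - x) + x / (1 - x)) (at x)" if "x < 1" for x :: real
  proof -
    have x: "1 - x \<noteq> 0" "x < 1" using that by auto
    show ?thesis
      unfolding f_def
      by (rule DERIV_cong, (use x in \<open>auto intro!: derivative_eq_intros\<close>)[1])
        (use x in \<open>simp add: field_simps\<close>)
  qed
  have pos: "0 < ln (1 - x) + x / (1 - x)" if "0 < x" "x < 1" for x :: real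
  proof -
    have "ln (inverse (1 - x)) < inverse (1 - x) - 1"
      using that by (intro ln_less_minus_one) auto
    moreover have "inverse (1 - x) - 1 = x / (1 - x)"
      using that by (simp add: field_simps)
    ultimately show ?thesis
      using that by (simp add: ln_inverse)
  qed
  have "f 0 < f t"
    by (rule DERIV_pos_interior_imp_increasing[where f' = "\<lambda>x. ln (1 - x) + x / (1 - x)"])
      (use assms der pos in auto)
  then have "2 * t < (2 - t) * - ln (1 - t)"
    by (simp add: f_def algebra_simps)
  then show ?thesis
    using assms by (simp add: pos_divide_less_eq mult.commute)
qed

lemma minus_ln_one_minus_lt:
  fixes t :: real
  assumes "0 < t" "t < 1"
  shows "- ln (1 - t) < t * (2 - t) / (2 * (1 - t))"
proof -
  define f where "f x = x * (2 - x) + 2 * (1 - x) * ln (1 - x)" for x :: real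
  have der: "(f has_real_derivative - 2 * x - 2 * ln (1 - x)) (at x)" if "x < 1" for x :: real
  proof -
    have x: "1 - x \<noteq> 0" "x < 1" using that by auto
    show ?thesis
      unfolding f_def
      by (rule DERIV_cong, (use x in \<open>auto intro!: derivative_eq_intros\<close>)[1])
        (use x in \<open>simp add: field_simps\<close>)
  qed
  have pos: "0 < - 2 * x - 2 * ln (1 - x)" if "0 < x" "x < 1" for x :: real
    using ln_less_minus_one[of "1 - x"] that by simp
  have "f 0 < f t"
    by (rule DERIV_pos_interior_imp_increasing[where f' = "\<lambda>x. - 2 * x - 2 * ln (1 - x)"])
      (use assms der pos in auto)
  then have "2 * (1 - t) * - ln (1 - t) < t * (2 - t)"
    by (simp add: f_def algebra_simps)
  then show ?thesis
    using assms by (simp add: less_divide_eq mult.commute)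
qed

lemma one_less_sqrt_mult_iff:
  fixes p B :: real
  assumes "0 < B"
  shows "1 < sqrt p * B \<longleftrightarrow> 1 < p * B\<^sup>2"
proof -
  have "sqrt p * B = sqrt (p * B\<^sup>2)"
    using assms by (simp add: real_sqrt_mult)
  then show ?thesis
    by simp
qed

lemma sqrt_one_quarter [simp]: "sqrt (1/4 :: real) = 1/2"
  by (simp add: real_sqrt_divide)

lemma positive_fixed_point_unique:
  fixes h h' :: "real \<Rightarrow> real"
  assumes der: "\<And>x. (h has_real_derivative h' x) (at x)"
    and dec: "\<And>x y. 0 \<le> x \<Longrightarrow> x < y \<Longrightarrow> h' y < h' x"
    and "h 0 = 0" "0 < x" "h x = x" "0 < y" "h y = y"
  shows "x = y"
proof -
  have False if ab: "0 < a" "a < b" "h a = a" "h b = b" for a b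
  proof -
    obtain z1 where z1: "0 < z1" "z1 < a" "h a - h 0 = (a - 0) * h' z1"
      using MVT2[of 0 a h h'] der ab(1) by auto
    obtain z2 where z2: "a < z2" "z2 < b" "h b - h a = (b - a) * h' z2"
      using MVT2[of a b h h'] der ab(2) by auto
    have "h' z1 = 1" "h' z2 = 1" using z1 z2 ab \<open>h 0 = 0\<close> by simp_all
    with dec[of z1 z2] z1 z2 show False by simp
  qed
  then show ?thesis
    using assms by (metis linorder_neqE_linordered_idom)
qed

lemma positive_fixed_point_exists:
  fixes h h' :: "real \<Rightarrow> real"
  assumes der: "\<And>x. (h has_real_derivative h' x) (at x)"
    and "h 0 = 0" "1 < h' 0" "h 1 < 1"
  shows "\<exists>x. 0 < x \<and> x < 1 \<and> h x = x"
proof -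
  have "((\<lambda>x. h x - x) has_real_derivative (h' 0 - 1)) (at 0)"
    using der[of 0] by (auto intro!: derivative_eq_intros)
  then obtain d where "0 < d" and d: "\<And>e. 0 < e \<Longrightarrow> e < d \<Longrightarrow> 0 < h e - e"
    using DERIV_pos_inc_right[of "\<lambda>x. h x - x" "h' 0 - 1" 0] assms by auto
  define e where "e = min (d/2) (1/2)"
  have e: "0 < e" "e < 1" "0 < h e - e"
    using \<open>0 < d\<close> d[of e] unfolding e_def by auto
  have "isCont (\<lambda>x. h x - x) x" for x
    using der DERIV_isCont by (auto intro!: continuous_intros)
  then obtain x where "e \<le> x" "x \<le> 1" "h x - x = 0"
    using IVT2[of "\<lambda>x. h x - x" 1 0 e] e assms by auto
  then show ?thesis
    using e assms by (intro exI[of _ x]) (auto simp: le_less)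
qed

section \<open>The equations defining theta\<close>

definition theta_system :: "real \<Rightarrow> real \<Rightarrow> real \<times> real \<Rightarrow> bool" where
  "theta_system a b t \<longleftrightarrow> 0 < fst t \<and> 0 < snd t \<and>
     exp (- a * snd t) = 1 - fst t \<and> exp (- b * fst t) = 1 - snd t"

lemma theta_system_lt_1: "theta_system a b t \<Longrightarrow> fst t < 1 \<and> snd t < 1"
  unfolding theta_system_def by (metis diff_gt_0_iff_gt exp_gt_zero)

lemma theta_system_minus_ln:
  assumes "theta_system a b (x, y)"
  shows "- ln (1 - x) = a * y" "- ln (1 - y) = b * x"
  using assms unfolding theta_system_def by (metis fst_conv snd_conv ln_exp minus_minus mult_minus_left)+

lemma theta_system_iff_fixed_point:
  assumes "0 < b"
  shows "theta_system a b (x, y) \<longleftrightarrow>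
    0 < x \<and> y = 1 - exp (- b * x) \<and> 1 - exp (- a * (1 - exp (- b * x))) = x"
  using assms unfolding theta_system_def by auto

lemma exp_exp_has_real_derivative:
  "((\<lambda>x. 1 - exp (- a * (1 - exp (- b * x)))) has_real_derivative
     a * b * exp (- b * x) * exp (- a * (1 - exp (- b * x)))) (at x)"
  by (auto intro!: derivative_eq_intros simp: algebra_simps)

lemma exp_exp_derivative_decreasing:
  fixes a b :: real
  assumes "0 < a" "0 < b" "0 \<le> x" "x < y"
  shows "a * b * exp (- b * y) * exp (- a * (1 - exp (- b * y)))
       < a * b * exp (- b * x) * exp (- a * (1 - exp (- b * x)))"
proof -
  have 1: "exp (- b * y) < exp (- b * x)" using assms by simp
  then have "exp (- a * (1 - exp (- b * y))) \<le> exp (- a * (1 - exp (- b * x)))"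
    using assms by (simp add: mult_le_cancel_left_pos)
  with 1 have "exp (- b * y) * exp (- a * (1 - exp (- b * y)))
      < exp (- b * x) * exp (- a * (1 - exp (- b * x)))"
    by (intro mult_less_le_imp_less) auto
  then show ?thesis using assms by simp
qed

lemma theta_system_unique:
  assumes "0 < a" "0 < b" "theta_system a b s" "theta_system a b t"
  shows "s = t"
proof -
  obtain x y x' y' where st: "s = (x, y)" "t = (x', y')" by fastforce
  note fixed = assms(3,4)[unfolded st theta_system_iff_fixed_point[OF \<open>0 < b\<close>]]
  have "x = x'"
    by (rule positive_fixed_point_unique[of "\<lambda>x. 1 - exp (- a * (1 - exp (- b * x)))",
          OF exp_exp_has_real_derivative exp_exp_derivative_decreasing[OF \<open>0 < a\<close> \<open>0 < b\<close>]])
      (use fixed in auto)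
  then show ?thesis
    using fixed st by simp
qed

lemma theta_system_exists:
  assumes "0 < a" "0 < b" "1 < a * b"
  shows "\<exists>t. theta_system a b t"
proof -
  obtain x where "0 < x" "x < 1" "1 - exp (- a * (1 - exp (- b * x))) = x"
    using positive_fixed_point_exists[OF exp_exp_has_real_derivative, of a b] assms by auto
  then have "theta_system a b (x, 1 - exp (- b * x))"
    using assms theta_system_iff_fixed_point by simp
  then show ?thesis ..
qed

lemma theta_system_prod_gt:
  assumes "theta_system a b (x, y)"
  shows "4 < a * b * ((2 - x) * (2 - y))"
proof -
  have xy: "0 < x" "x < 1" "0 < y" "y < 1"
    using assms theta_system_lt_1[OF assms] unfolding theta_system_def by auto
  have "2 * x / (2 - x) < a * y" "2 * y / (2 - y) < b * x"
    using minus_ln_one_minus_gt xy theta_system_minus_ln[OF assms] by metis+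
  then have gt: "2 * x < (2 - x) * (a * y)" "2 * y < (2 - y) * (b * x)"
    using xy by (simp_all add: pos_divide_less_eq mult.commute)
  then have "(2 * x) * (2 * y) < ((2 - x) * (a * y)) * ((2 - y) * (b * x))"
    by (rule mult_strict_mono) (use xy gt in linarith)+
  then have "4 * (x * y) < (a * b * ((2 - x) * (2 - y))) * (x * y)"
    by (simp add: algebra_simps)
  then show ?thesis
    using xy by (simp add: mult_less_cancel_right)
qed

lemma theta_system_supercritical:
  assumes "theta_system a b (x, y)"
  shows "1 < a * b"
proof -
  have xy: "0 < x" "x < 1" "0 < y" "y < 1"
    using assms theta_system_lt_1[OF assms] unfolding theta_system_def by auto
  then have "(2 - x) * (2 - y) < 2 * 2"
    by (intro mult_strict_mono) simp_all
  moreover have "0 < (2 - x) * (2 - y)"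
    using xy by simp
  moreover have "4 < a * b * ((2 - x) * (2 - y))"
    by (rule theta_system_prod_gt[OF assms])
  ultimately show ?thesis
    using mult_right_mono[of "a * b" 1 "(2 - x) * (2 - y)"] by fastforce
qed

lemma theta_system_prod_lt:
  assumes "theta_system a b (x, y)"
  shows "4 * (a * b) * ((1 - x) * (1 - y)) < (2 - x) * (2 - y)"
proof -
  have xy: "0 < x" "x < 1" "0 < y" "y < 1"
    using assms theta_system_lt_1[OF assms] unfolding theta_system_def by auto
  have "a * y < x * (2 - x) / (2 * (1 - x))" "b * x < y * (2 - y) / (2 * (1 - y))"
    using minus_ln_one_minus_lt xy theta_system_minus_ln[OF assms] by metis+
  then have lt: "2 * (1 - x) * (a * y) < x * (2 - x)" "2 * (1 - y) * (b * x) < y * (2 - y)"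
    using xy by (simp_all add: less_divide_eq mult.commute)
  have "0 < a * y" "0 < b * x"
    using xy unfolding theta_system_minus_ln[OF assms, symmetric] by simp_all
  with xy have pos: "0 < x * (2 - x)" "0 \<le> 2 * (1 - y) * (b * x)"
    by simp_all
  have "(2 * (1 - x) * (a * y)) * (2 * (1 - y) * (b * x)) < (x * (2 - x)) * (y * (2 - y))"
    by (rule mult_strict_mono[OF lt pos])
  then have "(4 * (a * b) * ((1 - x) * (1 - y))) * (x * y) < ((2 - x) * (2 - y)) * (x * y)"
    by (simp add: algebra_simps)
  then show ?thesis
    using xy by (simp add: mult_less_cancel_right)
qed

lemma theta_system_prod_lt_1:
  assumes "theta_system a b (x, y)"
  shows "a * b * ((1 - x) * (1 - y)) < 1"
proof -
  have "0 < x" "0 < y"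
    using assms unfolding theta_system_def by simp_all
  then have "(2 - x) * (2 - y) < 2 * 2"
    using theta_system_lt_1[OF assms] by (intro mult_strict_mono) simp_all
  with theta_system_prod_lt[OF assms] show ?thesis
    by simp
qed

lemma theta_subcritical: "sqrt (fst a * snd a) * B \<le> 1 \<Longrightarrow> theta B k a = (0, 0)"
  by (simp add: theta_def Let_def)

lemma theta_eqI:
  assumes "0 < B" "0 < k" "0 < aL" "0 < aR" "1 < sqrt (aL * aR) * B"
    and "theta_system (B * sqrt k * aR) (B / sqrt k * aL) t"
  shows "theta B k (aL, aR) = t"
proof -
  have pos: "0 < B * sqrt k * aR" "0 < B / sqrt k * aL" using assms by auto
  have "(THE t. theta_system (B * sqrt k * aR) (B / sqrt k * aL) t) = t"
    using theta_system_unique[OF pos] assms(6) by blast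
  then show ?thesis
    using assms(5) by (simp add: theta_def theta_system_def mult.assoc)
qed

lemma theta_coefficients_mult:
  "0 < k \<Longrightarrow> (B * sqrt k * aR) * (B / sqrt k * aL) = aL * aR * B\<^sup>2"
  by (simp add: power2_eq_square field_simps)

lemma theta_system_theta:
  assumes "0 < B" "0 < k" "0 < aL" "0 < aR" "1 < sqrt (aL * aR) * B"
  shows "theta_system (B * sqrt k * aR) (B / sqrt k * aL) (theta B k (aL, aR))"
proof -
  have pos: "0 < B * sqrt k * aR" "0 < B / sqrt k * aL" using assms by auto
  have "(B * sqrt k * aR) * (B / sqrt k * aL) = aL * aR * B\<^sup>2"
    using assms(2) by (rule theta_coefficients_mult)
  also have "1 < \<dots>"
    using assms(5) one_less_sqrt_mult_iff[OF assms(1)] by simp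
  finally obtain t where "theta_system (B * sqrt k * aR) (B / sqrt k * aL) t"
    using theta_system_exists[OF pos] by blast
  with theta_eqI[OF assms] show ?thesis by simp
qed

section \<open>Fixed points of F\<close>

definition fixed_point_system :: "real \<Rightarrow> real \<Rightarrow> real \<times> real \<Rightarrow> bool" where
  "fixed_point_system B k p \<longleftrightarrow> fst p \<in> {1/2<..<1} \<and> snd p \<in> {1/2<..<1} \<and>
     exp (B * sqrt k * (1 - 2 * snd p)) = (1 - fst p) / fst p \<and>
     exp ((B / sqrt k) * (1 - 2 * fst p)) = (1 - snd p) / snd p"

lemma fixed_point_system_iff_theta_system:
  assumes "aL * (2 - x) = 1" "aR * (2 - y) = 1"
  shows "fixed_point_system B k (aL, aR) \<longleftrightarrow>
    theta_system (B * sqrt k * aR) (B / sqrt k * aL) (x, y)"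
proof -
  have "aL \<noteq> 0" "aR \<noteq> 0"
    using assms by auto
  then have x: "x = 2 - 1 / aL" and y: "y = 2 - 1 / aR"
    using assms by (auto simp: field_simps)
  have half_one: "a \<in> {1/2<..<1} \<longleftrightarrow> 0 < 2 - 1 / a \<and> 2 - 1 / a < 1" for a :: real
  proof (cases "0 < a")
    case False
    then have "1 / a \<le> 0" by simp
    with False show ?thesis unfolding greaterThanLessThan_iff by linarith
  qed (auto simp: field_simps)
  have "aL \<in> {1/2<..<1} \<longleftrightarrow> 0 < x \<and> x < 1" "aR \<in> {1/2<..<1} \<longleftrightarrow> 0 < y \<and> y < 1"
    unfolding x y half_one by simp_all
  moreover have "B * sqrt k * (1 - 2 * aR) = - (B * sqrt k * aR) * y"
    "B / sqrt k * (1 - 2 * aL) = - (B / sqrt k * aL) * x"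
    using assms by (simp_all add: algebra_simps)
  moreover have "(1 - aL) / aL = 1 - x" "(1 - aR) / aR = 1 - y"
    unfolding x y using \<open>aL \<noteq> 0\<close> \<open>aR \<noteq> 0\<close> by (auto simp: field_simps)
  ultimately show ?thesis
    unfolding fixed_point_system_def theta_system_def
    by (auto simp del: greaterThanLessThan_iff) (metis diff_gt_0_iff_gt exp_gt_zero)+
qed

lemma fixed_point_system_theta_system:
  assumes "fixed_point_system B k (aL, aR)"
  shows "theta_system (B * sqrt k * aR) (B / sqrt k * aL) (2 - 1 / aL, 2 - 1 / aR)"
proof -
  have "0 < aL" "0 < aR"
    using assms unfolding fixed_point_system_def by auto
  then have "aL * (2 - (2 - 1 / aL)) = 1" "aR * (2 - (2 - 1 / aR)) = 1"
    by simp_all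
  then show ?thesis
    using assms fixed_point_system_iff_theta_system by blast
qed

lemma fixed_point_system_gt_2:
  assumes "0 < B" "0 < k" "fixed_point_system B k (aL, aR)"
  shows "2 < B"
proof -
  have "0 < aL" "0 < aR"
    using assms unfolding fixed_point_system_def by auto
  have "4 < (B * sqrt k * aR) * (B / sqrt k * aL) * ((2 - (2 - 1 / aL)) * (2 - (2 - 1 / aR)))"
    using theta_system_prod_gt[OF fixed_point_system_theta_system[OF assms(3)]] .
  also have "\<dots> = B\<^sup>2"
    using \<open>0 < aL\<close> \<open>0 < aR\<close> \<open>0 < k\<close> by (simp add: field_simps power2_eq_square)
  finally have "2\<^sup>2 < B\<^sup>2" by simp
  then show ?thesis
    using power_less_imp_less_base \<open>0 < B\<close> by fastforce
qed

lemma fixed_point_system_supercritical: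
  assumes "0 < B" "0 < k" "fixed_point_system B k (aL, aR)"
  shows "0 < aL" "0 < aR" "1 < sqrt (aL * aR) * B"
proof -
  have a: "1/2 < aL" "1/2 < aR"
    using assms(3) unfolding fixed_point_system_def by auto
  then show "0 < aL" "0 < aR" by simp_all
  have "1/2 * (1/2) < aL * aR"
    using a by (intro mult_strict_mono) auto
  then have "sqrt (1/4) < sqrt (aL * aR)"
    by (intro real_sqrt_less_mono) simp
  then have sqrt_gt: "1/2 < sqrt (aL * aR)"
    by simp
  moreover have "0 < sqrt (aL * aR)"
    using sqrt_gt by linarith
  ultimately have "1/2 * 2 < sqrt (aL * aR) * B"
    using mult_strict_mono[OF sqrt_gt fixed_point_system_gt_2[OF assms]] by simp
  then show "1 < sqrt (aL * aR) * B" by simp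
qed

lemma fixed_point_system_theta:
  assumes "0 < B" "0 < k" "fixed_point_system B k (aL, aR)"
  shows "theta B k (aL, aR) = (2 - 1 / aL, 2 - 1 / aR)"
  using theta_eqI[OF assms(1,2) fixed_point_system_supercritical[OF assms]]
    fixed_point_system_theta_system[OF assms(3)] .

lemma fixed_point_system_fixed_point:
  assumes "0 < B" "0 < k" "fixed_point_system B k p"
  shows "p \<in> fixed_points (Fmap B k)"
proof -
  obtain aL aR where p: "p = (aL, aR)" by fastforce
  have "1/2 < aL" "aL < 1" "1/2 < aR" "aR < 1"
    using assms(3) unfolding p fixed_point_system_def by auto
  then show ?thesis
    using fixed_point_system_theta[OF assms(1,2) assms(3)[unfolded p]]
    unfolding p fixed_points_def unit_square_def Fmap_def by (simp add: field_simps)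
qed

lemma center_fixed_point:
  assumes "B \<le> 2"
  shows "(1/2, 1/2) \<in> fixed_points (Fmap B k)"
proof -
  have "theta B k (1/2, 1/2) = (0, 0)"
    using assms by (intro theta_subcritical) simp
  then show ?thesis
    unfolding fixed_points_def unit_square_def Fmap_def by simp
qed

lemma fixed_points_cases:
  assumes "0 < B" "0 < k" "q \<in> fixed_points (Fmap B k)"
  shows "(q = (1/2, 1/2) \<and> B \<le> 2) \<or> fixed_point_system B k q"
proof -
  obtain aL aR where q: "q = (aL, aR)" by fastforce
  have nonneg: "0 \<le> aL" "0 \<le> aR" and fixed: "Fmap B k (aL, aR) = (aL, aR)"
    using assms(3) unfolding q fixed_points_def unit_square_def by auto
  show ?thesis
  proof (cases "sqrt (aL * aR) * B \<le> 1")
    case True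
    then have a: "aL = 1/2" "aR = 1/2"
      using fixed theta_subcritical[of "(aL, aR)"] unfolding Fmap_def by auto
    then have "B \<le> 2"
      using True unfolding a by simp
    with a show ?thesis
      unfolding q by simp
  next
    case False
    then have "sqrt (aL * aR) \<noteq> 0"
      by auto
    then have "0 < aL" "0 < aR"
      using nonneg by (auto simp: less_le)
    obtain x y where th: "theta B k (aL, aR) = (x, y)" by fastforce
    have "theta_system (B * sqrt k * aR) (B / sqrt k * aL) (x, y)"
      using theta_system_theta[OF assms(1,2) \<open>0 < aL\<close> \<open>0 < aR\<close>] False th by simp
    moreover have "aL * (2 - x) = 1" "aR * (2 - y) = 1"
      using fixed unfolding Fmap_def th by (auto simp: algebra_simps)
    ultimately show ?thesis
      unfolding q using fixed_point_system_iff_theta_system by blast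
  qed
qed

section \<open>Uniqueness of the nontrivial fixed point\<close>

lemma exp_eq_ratio_iff_tanh:
  fixes u z :: real
  assumes "-1 < u" "u < 1"
  shows "exp (- z) = (1 - u) / (1 + u) \<longleftrightarrow> u = tanh (z / 2)"
proof -
  have tanh: "tanh (z / 2) = (1 - exp (- z)) / (1 + exp (- z))"
    using tanh_real_altdef[of "z / 2"] by simp
  have "0 < exp (- z)" "1 + exp (- z) \<noteq> 0"
    by (simp, smt (verit) exp_gt_zero)
  then show ?thesis
    unfolding tanh using assms by (auto simp: field_simps)
qed

lemma fixed_point_system_iff_tanh:
  assumes "0 < B" "0 < k"
  shows "fixed_point_system B k (aL, aR) \<longleftrightarrow>
    0 < 2 * aL - 1 \<and> 2 * aR - 1 = tanh (B / sqrt k / 2 * (2 * aL - 1)) \<and>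
    tanh (B * sqrt k / 2 * tanh (B / sqrt k / 2 * (2 * aL - 1))) = 2 * aL - 1"
proof -
  define u v where "u = 2 * aL - 1" and "v = 2 * aR - 1"
  have uv: "aL = (1 + u) / 2" "aR = (1 + v) / 2"
    unfolding u_def v_def by simp_all
  have "(1 - aL) / aL = (1 - u) / (1 + u)" "(1 - aR) / aR = (1 - v) / (1 + v)"
    unfolding uv by (simp_all add: divide_simps algebra_simps)
  moreover have "B * sqrt k * (1 - 2 * aR) = - (B * sqrt k * v)"
    "B / sqrt k * (1 - 2 * aL) = - (B / sqrt k * u)"
    unfolding uv by (simp_all add: algebra_simps)
  ultimately have "fixed_point_system B k (aL, aR) \<longleftrightarrow> u \<in> {0<..<1} \<and> v \<in> {0<..<1} \<and>
      exp (- (B * sqrt k * v)) = (1 - u) / (1 + u) \<and> exp (- (B / sqrt k * u)) = (1 - v) / (1 + v)"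
    unfolding fixed_point_system_def uv by auto
  also have "\<dots> \<longleftrightarrow> u \<in> {0<..<1} \<and> v \<in> {0<..<1} \<and>
      u = tanh (B * sqrt k / 2 * v) \<and> v = tanh (B / sqrt k / 2 * u)"
    using exp_eq_ratio_iff_tanh[of u] exp_eq_ratio_iff_tanh[of v] by (auto simp: mult_ac)
  also have "\<dots> \<longleftrightarrow> 0 < u \<and> v = tanh (B / sqrt k / 2 * u) \<and>
      tanh (B * sqrt k / 2 * tanh (B / sqrt k / 2 * u)) = u"
    using assms by (auto simp: tanh_real_lt_1, metis tanh_real_lt_1)
  finally show ?thesis
    unfolding u_def v_def .
qed

lemma one_minus_tanh_sq_pos: "0 < 1 - tanh x ^ 2" for x :: real
  using tanh_real_bounds[of x] by (simp add: abs_square_less_1 abs_less_iff)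

lemma tanh_tanh_has_real_derivative:
  fixes c d :: real
  shows "((\<lambda>x. tanh (c * tanh (d * x))) has_real_derivative
     c * d * ((1 - tanh (c * tanh (d * x)) ^ 2) * (1 - tanh (d * x) ^ 2))) (at x)"
proof -
  have cosh: "cosh y \<noteq> 0" for y :: real
    using cosh_real_pos[of y] by simp
  have "((\<lambda>x. d * x) has_real_derivative d) (at x)"
    using DERIV_cmult[OF DERIV_ident, of d] by simp
  then have "((\<lambda>x. tanh (d * x)) has_real_derivative (1 - tanh (d * x) ^ 2) * d) (at x)"
    by (rule has_field_derivative_tanh[OF cosh])
  from has_field_derivative_tanh[OF cosh DERIV_cmult[OF this, of c]]
  show ?thesis
    by (simp add: ac_simps)
qed

lemma tanh_tanh_derivative_decreasing:
  fixes c d x y :: real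
  assumes "0 < c" "0 < d" "0 \<le> x" "x < y"
  shows "c * d * ((1 - tanh (c * tanh (d * y)) ^ 2) * (1 - tanh (d * y) ^ 2))
       < c * d * ((1 - tanh (c * tanh (d * x)) ^ 2) * (1 - tanh (d * x) ^ 2))"
proof -
  have tanh_sq_less: "tanh s ^ 2 < tanh t ^ 2" if "0 \<le> s" "s < t" for s t :: real
    using that by (intro power_strict_mono) auto
  have "0 \<le> d * x" "d * x < d * y"
    using assms by simp_all
  then have inner: "1 - tanh (d * y) ^ 2 < 1 - tanh (d * x) ^ 2"
    and "0 \<le> c * tanh (d * x)" "c * tanh (d * x) \<le> c * tanh (d * y)"
    using tanh_sq_less \<open>0 < c\<close> by auto
  then have outer: "1 - tanh (c * tanh (d * y)) ^ 2 \<le> 1 - tanh (c * tanh (d * x)) ^ 2"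
    by (cases "c * tanh (d * x) = c * tanh (d * y)") (auto dest: tanh_sq_less)
  have "(1 - tanh (c * tanh (d * y)) ^ 2) * (1 - tanh (d * y) ^ 2)
      < (1 - tanh (c * tanh (d * x)) ^ 2) * (1 - tanh (d * x) ^ 2)"
    by (rule mult_le_less_imp_less[OF outer inner one_minus_tanh_sq_pos
          less_imp_le[OF one_minus_tanh_sq_pos]])
  then show ?thesis
    using assms by simp
qed

lemma tanh_tanh_positive_fixed_point_ex1:
  fixes c d :: real
  assumes "0 < c" "0 < d" "1 < c * d"
  shows "\<exists>!u. 0 < u \<and> tanh (c * tanh (d * u)) = u"
proof -
  note der = tanh_tanh_has_real_derivative[of c d]
  obtain u where "0 < u" "u < 1" "tanh (c * tanh (d * u)) = u"
    using positive_fixed_point_exists[OF der] assms tanh_real_lt_1 by auto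
  moreover have "u = u'" if "0 < u'" "tanh (c * tanh (d * u')) = u'" for u'
    by (rule positive_fixed_point_unique[OF der tanh_tanh_derivative_decreasing[OF \<open>0 < c\<close> \<open>0 < d\<close>]])
      (use calculation that in auto)
  ultimately show ?thesis
    by blast
qed

lemma fixed_point_system_ex1:
  assumes "2 < B" "0 < k"
  shows "\<exists>!p. fixed_point_system B k p"
proof -
  define c d where "c = B * sqrt k / 2" and "d = B / sqrt k / 2"
  have "0 < c" "0 < d"
    using assms unfolding c_def d_def by simp_all
  have "c * d = B * B / 4"
    using assms unfolding c_def d_def by simp
  moreover have "2 * 2 < B * B"
    using assms by (intro mult_strict_mono) simp_all
  ultimately have "1 < c * d"
    by simp
  then obtain u where u: "0 < u" "tanh (c * tanh (d * u)) = u"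
    and uniq: "\<And>u'. 0 < u' \<Longrightarrow> tanh (c * tanh (d * u')) = u' \<Longrightarrow> u' = u"
    using tanh_tanh_positive_fixed_point_ex1[OF \<open>0 < c\<close> \<open>0 < d\<close>] by (metis (mono_tags))
  have fps: "fixed_point_system B k p \<longleftrightarrow>
      0 < 2 * fst p - 1 \<and> 2 * snd p - 1 = tanh (d * (2 * fst p - 1)) \<and>
      tanh (c * tanh (d * (2 * fst p - 1))) = 2 * fst p - 1" for p
    using fixed_point_system_iff_tanh[of B k "fst p" "snd p"] assms unfolding c_def d_def
    by simp
  show ?thesis
  proof (rule ex1I)
    have "2 * ((1 + w) / 2) - 1 = w" for w :: real
      by (simp add: field_simps)
    then show "fixed_point_system B k ((1 + u) / 2, (1 + tanh (d * u)) / 2)"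
      unfolding fps fst_conv snd_conv using u by simp
    fix p
    assume "fixed_point_system B k p"
    then have "0 < 2 * fst p - 1" "2 * snd p - 1 = tanh (d * (2 * fst p - 1))"
      "tanh (c * tanh (d * (2 * fst p - 1))) = 2 * fst p - 1"
      unfolding fps by simp_all
    moreover from calculation have "2 * fst p - 1 = u"
      by (intro uniq)
    ultimately show "p = ((1 + u) / 2, (1 + tanh (d * u)) / 2)"
      by (simp add: prod_eq_iff field_simps)
  qed
qed

section \<open>Eigenvalues of real 2x2 matrices\<close>

lemma eigenvalue2_char_poly:
  assumes "eigenvalue2 a b c d l"
  shows "l\<^sup>2 - of_real (a + d) * l + of_real (a * d - b * c) = 0"
proof -
  obtain v1 v2 :: complex where nz: "(v1, v2) \<noteq> (0, 0)"
    and e1: "of_real a * v1 + of_real b * v2 = l * v1"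
    and e2: "of_real c * v1 + of_real d * v2 = l * v2"
    using assms unfolding eigenvalue2_def by blast
  define p where "p = l\<^sup>2 - of_real (a + d) * l + of_real (a * d - b * c)"
  have "p * v1 = (of_real d - l) * (of_real a * v1 + of_real b * v2 - l * v1)
                 - of_real b * (of_real c * v1 + of_real d * v2 - l * v2)"
    "p * v2 = (of_real a - l) * (of_real c * v1 + of_real d * v2 - l * v2)
                 - of_real c * (of_real a * v1 + of_real b * v2 - l * v1)"
    unfolding p_def by (simp_all add: algebra_simps power2_eq_square)
  then have "p * v1 = 0" "p * v2 = 0"
    using e1 e2 by simp_all
  then show ?thesis
    using nz unfolding p_def by auto
qed

lemma quadratic_root_cmod_less_1:
  fixes T D :: real and l :: complex
  assumes "l\<^sup>2 - of_real T * l + of_real D = 0" "\<bar>D\<bar> < 1" "\<bar>T\<bar> < 1 + D"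
  shows "cmod l < 1"
proof -
  obtain x y where l: "l = Complex x y" by (cases l)
  have re: "x\<^sup>2 - y\<^sup>2 - T * x + D = 0" and im: "(2 * x - T) * y = 0"
    using assms(1) unfolding l
    by (simp_all add: complex_eq_iff power2_eq_square algebra_simps)
  show ?thesis
  proof (cases "y = 0")
    case True
    then have q: "x\<^sup>2 - T * x + D = 0"
      using re by simp
    have "x * (1 - T + D) = (1 - x) * (x - D)" "x * (1 + T + D) = (1 + x) * (x + D)"
      using q by (simp_all add: algebra_simps power2_eq_square)
    moreover have "x \<ge> 1 \<Longrightarrow> (1 - x) * (x - D) \<le> 0" "x \<le> -1 \<Longrightarrow> 0 \<le> (1 + x) * (x + D)"
      using assms(2) by (auto intro: mult_nonpos_nonneg mult_nonpos_nonpos)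
    ultimately have "\<bar>x\<bar> < 1"
      using assms(3) by (smt (verit) mult_pos_pos mult_neg_pos)
    then show ?thesis
      using True l by (simp add: cmod_def)
  next
    case False
    then have "T = 2 * x"
      using im by simp
    then have "D = x\<^sup>2 + y\<^sup>2"
      using re by (simp add: algebra_simps power2_eq_square)
    then have "(cmod l)\<^sup>2 = D"
      unfolding l by (simp add: cmod_power2)
    then have "(cmod l)\<^sup>2 < 1\<^sup>2"
      using assms(2) by simp
    then show ?thesis
      using power_less_imp_less_base by fastforce
  qed
qed

lemma eigenvalue2_cmod_less_1:
  assumes "eigenvalue2 a b c d l" "\<bar>a * d - b * c\<bar> < 1" "\<bar>a + d\<bar> < 1 + (a * d - b * c)"
  shows "cmod l < 1"
  using quadratic_root_cmod_less_1[OF eigenvalue2_char_poly[OF assms(1)] assms(2,3)] .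

lemma jury_conditions:
  fixes x y s :: real
  assumes "0 < x" "x < 1" "0 < y" "y < 1" "1 < s" "s * (2 * (x + y) - x * y) < 4"
  shows "\<bar>x * y * s / 4\<bar> < 1" "\<bar>(x + y) * s / 2\<bar> < 1 + x * y * s / 4"
proof -
  have "x * y < x"
    using mult_strict_left_mono[of y 1 x] assms(1-4) by simp
  then have "x * y \<le> 2 * (x + y) - x * y"
    using assms(1-4) by (smt (verit))
  then have "s * (x * y) \<le> s * (2 * (x + y) - x * y)"
    using assms(5) by (intro mult_left_mono) simp_all
  then have "s * (x * y) < 4"
    using assms(6) by linarith
  then show "\<bar>x * y * s / 4\<bar> < 1"
    using assms by (simp add: mult_ac)
  show "\<bar>(x + y) * s / 2\<bar> < 1 + x * y * s / 4"
    using assms by (simp add: algebra_simps)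
qed

section \<open>The Jacobian of F\<close>

lemma jacobian_attractive_center:
  assumes "B < 2"
  shows "jacobian_attractive (Fmap B k) (1/2, 1/2)"
proof -
  define S where "S = {a :: real \<times> real. sqrt (fst a * snd a) * B < 1}"
  have "open S"
    unfolding S_def by (rule open_Collect_less) (intro continuous_intros)+
  moreover have "(1/2, 1/2) \<in> S"
    using assms unfolding S_def by simp
  moreover have "(\<lambda>_. (1/2, 1/2)) a = Fmap B k a" if "a \<in> S" for a
    using that theta_subcritical[of a B k] unfolding S_def Fmap_def by simp
  ultimately have "(Fmap B k has_derivative (\<lambda>_. 0)) (at (1/2, 1/2))"
    by (rule has_derivative_transform_within_open[OF has_derivative_const])
  moreover have "cmod l < 1" if "eigenvalue2 0 0 0 0 l" for l
    using eigenvalue2_cmod_less_1[OF that] by simp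
  ultimately show ?thesis
    unfolding jacobian_attractive_def by (auto intro: differentiableI)
qed

definition theta_inverse :: "real \<Rightarrow> real \<Rightarrow> real \<times> real \<Rightarrow> real \<times> real" where
  "theta_inverse B k t =
     (- ln (1 - snd t) / (B / sqrt k * fst t), - ln (1 - fst t) / (B * sqrt k * snd t))"

lemma theta_theta_inverse:
  assumes "0 < B" "0 < k" "t \<in> {0<..<1} \<times> {0<..<1}"
  shows "theta B k (theta_inverse B k t) = t"
proof -
  obtain x y where t: "t = (x, y)" and xy: "0 < x" "x < 1" "0 < y" "y < 1"
    using assms(3) by auto
  define aL aR where "aL = fst (theta_inverse B k t)" and "aR = snd (theta_inverse B k t)"
  have "0 < aL" "0 < aR"
    unfolding aL_def aR_def theta_inverse_def t fst_conv snd_conv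
    by (intro divide_pos_pos mult_pos_pos; use assms xy in simp)+
  have "theta_system (B * sqrt k * aR) (B / sqrt k * aL) (x, y)"
    using assms xy unfolding theta_system_def aL_def aR_def theta_inverse_def t by simp
  moreover have "(B * sqrt k * aR) * (B / sqrt k * aL) = aL * aR * B\<^sup>2"
    using assms(2) by (rule theta_coefficients_mult)
  ultimately have "1 < sqrt (aL * aR) * B"
    using theta_system_supercritical one_less_sqrt_mult_iff[OF \<open>0 < B\<close>] by metis
  with \<open>theta_system (B * sqrt k * aR) (B / sqrt k * aL) (x, y)\<close> show ?thesis
    using theta_eqI[OF assms(1,2) \<open>0 < aL\<close> \<open>0 < aR\<close>] unfolding aL_def aR_def t by simp
qed

lemma theta_inverse_theta:
  assumes "0 < B" "0 < k" "theta_system (B * sqrt k * aR) (B / sqrt k * aL) (x, y)"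
  shows "theta_inverse B k (x, y) = (aL, aR)"
  using theta_system_minus_ln[OF assms(3)] assms(1,2) assms(3)[unfolded theta_system_def]
  by (simp add: theta_inverse_def)

lemma theta_inverse_has_derivative:
  assumes "0 < B" "0 < k" "0 < x" "x < 1" "0 < y" "y < 1"
  shows "(theta_inverse B k has_derivative
     (\<lambda>h. (ln (1 - y) / (B / sqrt k * x\<^sup>2) * fst h + 1 / ((1 - y) * (B / sqrt k) * x) * snd h,
           1 / ((1 - x) * (B * sqrt k) * y) * fst h + ln (1 - x) / (B * sqrt k * y\<^sup>2) * snd h)))
     (at (x, y))"
proof -
  have "((\<lambda>t. - ln (1 - snd t) / (B / sqrt k * fst t)) has_derivative
     (\<lambda>h. ln (1 - y) / (B / sqrt k * x\<^sup>2) * fst h + 1 / ((1 - y) * (B / sqrt k) * x) * snd h))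
     (at (x, y))"
    by (rule has_derivative_eq_rhs, (use assms in \<open>auto intro!: derivative_eq_intros\<close>)[1])
      (use assms in \<open>auto simp: fun_eq_iff field_simps power2_eq_square\<close>)
  moreover have "((\<lambda>t. - ln (1 - fst t) / (B * sqrt k * snd t)) has_derivative
     (\<lambda>h. 1 / ((1 - x) * (B * sqrt k) * y) * fst h + ln (1 - x) / (B * sqrt k * y\<^sup>2) * snd h))
     (at (x, y))"
    by (rule has_derivative_eq_rhs, (use assms in \<open>auto intro!: derivative_eq_intros\<close>)[1])
      (use assms in \<open>auto simp: fun_eq_iff field_simps power2_eq_square\<close>)
  ultimately show ?thesis
    unfolding theta_inverse_def by (rule has_derivative_Pair)
qed

lemma theta_inverse_jacobian_ratio:
  fixes B k x y aL aR :: real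
  assumes "0 < B" "0 < k" "0 < x" "x < 1" "0 < y" "y < 1"
  shows "aL / x * (aR / y) = (B * sqrt k * aR) * (B / sqrt k * aL) * ((1 - x) * (1 - y)) *
    (1 / ((1 - y) * (B / sqrt k) * x) * (1 / ((1 - x) * (B * sqrt k) * y)))"
proof -
  define E where "E = (B * sqrt k) * (B / sqrt k) * ((1 - x) * (1 - y))"
  have "E \<noteq> 0"
    using assms unfolding E_def by simp
  have num: "(B * sqrt k * aR) * (B / sqrt k * aL) * ((1 - x) * (1 - y)) = aL * aR * E"
    and denom: "(1 - y) * (B / sqrt k) * x * ((1 - x) * (B * sqrt k) * y) = x * y * E"
    unfolding E_def by (simp_all only: mult_ac)
  have "aL / x * (aR / y) = aL * aR * E / (x * y * E)"
    using \<open>E \<noteq> 0\<close> by simp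
  then show ?thesis
    unfolding num[symmetric] denom[symmetric] by simp
qed

lemma theta_has_derivative:
  assumes "0 < B" "0 < k" "0 < aL" "0 < aR" "1 < sqrt (aL * aR) * B"
    and theta: "theta B k (aL, aR) = (x, y)"
  defines "X \<equiv> aL / x" and "Y \<equiv> aR / y"
    and "P \<equiv> 1 / ((1 - y) * (B / sqrt k) * x)" and "Q \<equiv> 1 / ((1 - x) * (B * sqrt k) * y)"
  shows "X * Y < P * Q"
    and "(theta B k has_derivative
      (\<lambda>h. ((- Y * fst h - P * snd h) / (X * Y - P * Q), (- Q * fst h - X * snd h) / (X * Y - P * Q))))
      (at (aL, aR))"
proof -
  have sys: "theta_system (B * sqrt k * aR) (B / sqrt k * aL) (x, y)"
    using theta_system_theta[OF assms(1-5)] theta by simp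
  then have xy: "0 < x" "x < 1" "0 < y" "y < 1"
    using theta_system_lt_1[OF sys] unfolding theta_system_def by auto
  have "0 < P * Q"
    using assms xy unfolding P_def Q_def by simp
  with theta_system_prod_lt_1[OF sys]
  have "(B * sqrt k * aR) * (B / sqrt k * aL) * ((1 - x) * (1 - y)) * (P * Q) < 1 * (P * Q)"
    by (rule mult_strict_right_mono)
  moreover have "X * Y = (B * sqrt k * aR) * (B / sqrt k * aL) * ((1 - x) * (1 - y)) * (P * Q)"
    using theta_inverse_jacobian_ratio[OF assms(1,2) xy] unfolding X_def Y_def P_def Q_def .
  ultimately show "X * Y < P * Q"
    by linarith
  define S where "S = {0<..<1::real} \<times> {0<..<1::real}"
  have "open S" "(x, y) \<in> S"
    unfolding S_def using xy by (auto intro: open_Times)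
  have "ln (1 - y) / (B / sqrt k * x\<^sup>2) = - X" "ln (1 - x) / (B * sqrt k * y\<^sup>2) = - Y"
    using theta_system_minus_ln[OF sys] assms(1,2) xy
    unfolding X_def Y_def by (auto simp: field_simps power2_eq_square)
  then have deriv: "(theta_inverse B k has_derivative
      (\<lambda>h. (- X * fst h + P * snd h, Q * fst h - Y * snd h))) (at (x, y))"
    using theta_inverse_has_derivative[OF assms(1,2) xy] unfolding P_def Q_def by simp
  have "isCont (theta_inverse B k) t" if "t \<in> S" for t
    using that theta_inverse_has_derivative[OF assms(1,2), of "fst t" "snd t"]
    unfolding S_def by (auto dest!: has_derivative_continuous)
  then have cont: "continuous_on S (theta_inverse B k)"
    by (simp add: continuous_at_imp_continuous_on)
  have left_inverse: "theta B k (theta_inverse B k t) = t" if "t \<in> S" for t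
    using theta_theta_inverse[OF assms(1,2)] that unfolding S_def by blast
  define \<Delta> where "\<Delta> = X * Y - P * Q"
  have "\<Delta> \<noteq> 0"
    using \<open>X * Y < P * Q\<close> unfolding \<Delta>_def by simp
  then have "(\<lambda>h. (- X * fst h + P * snd h, Q * fst h - Y * snd h)) \<circ>
      (\<lambda>h. ((- Y * fst h - P * snd h) / \<Delta>, (- Q * fst h - X * snd h) / \<Delta>)) = id"
    by (auto simp: fun_eq_iff field_simps; simp add: \<Delta>_def algebra_simps)
  from has_derivative_inverse_strong[OF \<open>open S\<close> \<open>(x, y) \<in> S\<close> cont left_inverse deriv this]
  show "(theta B k has_derivative
      (\<lambda>h. ((- Y * fst h - P * snd h) / (X * Y - P * Q), (- Q * fst h - X * snd h) / (X * Y - P * Q))))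
      (at (aL, aR))"
    unfolding theta_inverse_theta[OF assms(1,2) sys] \<Delta>_def .
qed

lemma Fmap_has_derivative:
  assumes "(theta B k has_derivative g') (at a)"
  shows "(Fmap B k has_derivative
    (\<lambda>h. ((fst (g' h) * fst a + fst (theta B k a) * fst h) / 2,
          (snd (g' h) * snd a + snd (theta B k a) * snd h) / 2))) (at a)"
  unfolding Fmap_def[abs_def]
  by (rule has_derivative_eq_rhs, (auto intro!: derivative_eq_intros assms)[1])
    (simp add: fun_eq_iff algebra_simps)

lemma jacobian_trace_det_from_inverse:
  fixes x y aL aR X Y P Q \<Delta> :: real
  assumes "aL = X * x" "aR = Y * y" "\<Delta> = X * Y - P * Q" "\<Delta> \<noteq> 0"
  shows "(- Y / \<Delta> * aL + x) / 2 + (- X / \<Delta> * aR + y) / 2 = (x + y) * (- (P * Q) / \<Delta>) / 2"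
    and "(- Y / \<Delta> * aL + x) / 2 * ((- X / \<Delta> * aR + y) / 2) - (- P / \<Delta> * aL) / 2 * ((- Q / \<Delta> * aR) / 2)
      = x * y * (- (P * Q) / \<Delta>) / 4"
  using assms(4) unfolding assms(1,2)
  by (simp_all add: field_simps) (simp_all add: assms(3) algebra_simps power2_eq_square)

lemma jacobian_attractive_supercritical:
  assumes "0 < B" "0 < k" "0 < aL" "0 < aR" "1 < sqrt (aL * aR) * B"
  shows "jacobian_attractive (Fmap B k) (aL, aR)"
proof -
  obtain x y where theta: "theta B k (aL, aR) = (x, y)" by fastforce
  have sys: "theta_system (B * sqrt k * aR) (B / sqrt k * aL) (x, y)"
    using theta_system_theta[OF assms] theta by simp
  then have xy: "0 < x" "x < 1" "0 < y" "y < 1"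
    using theta_system_lt_1[OF sys] unfolding theta_system_def by auto
  define X Y P Q where "X = aL / x" and "Y = aR / y"
    and "P = 1 / ((1 - y) * (B / sqrt k) * x)" and "Q = 1 / ((1 - x) * (B * sqrt k) * y)"
  define r where "r = (B * sqrt k * aR) * (B / sqrt k * aL) * ((1 - x) * (1 - y))"
  have "0 < r" "4 * r < (2 - x) * (2 - y)" "r < 1"
    using theta_system_prod_lt[OF sys] theta_system_prod_lt_1[OF sys] assms xy
    unfolding r_def by (simp_all add: mult_ac)
  have "0 < P" "0 < Q"
    using assms xy unfolding P_def Q_def by simp_all
  define \<Delta> where "\<Delta> = X * Y - P * Q"
  have "X * Y = r * (P * Q)"
    using theta_inverse_jacobian_ratio[OF assms(1,2) xy] unfolding X_def Y_def P_def Q_def r_def .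
  then have "\<Delta> = - ((1 - r) * (P * Q))"
    unfolding \<Delta>_def by (simp add: algebra_simps)
  then have "\<Delta> \<noteq> 0" and s: "- (P * Q) / \<Delta> = 1 / (1 - r)"
    using \<open>r < 1\<close> \<open>0 < P\<close> \<open>0 < Q\<close> by simp_all
  have "1 < 1 / (1 - r)" "1 / (1 - r) * (2 * (x + y) - x * y) < 4"
    using \<open>0 < r\<close> \<open>4 * r < (2 - x) * (2 - y)\<close> \<open>r < 1\<close> by (simp_all add: field_simps)
  note jury = jury_conditions[OF xy this, folded s]
  define D where "D h = (((- Y * fst h - P * snd h) / \<Delta> * aL + x * fst h) / 2,
      ((- Q * fst h - X * snd h) / \<Delta> * aR + y * snd h) / 2)" for h :: "real \<times> real"
  have "(Fmap B k has_derivative D) (at (aL, aR))"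
    using Fmap_has_derivative[OF theta_has_derivative(2)[OF assms theta]] theta
    unfolding D_def \<Delta>_def X_def Y_def P_def Q_def by simp
  moreover have "aL = X * x" "aR = Y * y"
    using xy unfolding X_def Y_def by simp_all
  note trace_det = jacobian_trace_det_from_inverse[OF this \<Delta>_def \<open>\<Delta> \<noteq> 0\<close>]
  have "cmod l < 1"
    if "eigenvalue2 (fst (D (1, 0))) (fst (D (0, 1))) (snd (D (1, 0))) (snd (D (0, 1))) l" for l
    using eigenvalue2_cmod_less_1[OF that] trace_det jury by (simp add: D_def)
  ultimately show ?thesis
    unfolding jacobian_attractive_def by (auto intro: differentiableI)
qed

theorem lemma9:
  fixes B k :: real
  assumes "k \<ge> 1" and "B > 0"
  shows "(B < 2 \<longrightarrow>
            fixed_points (Fmap B k) = {(1/2, 1/2)} \<and> jacobian_attractive (Fmap B k) (1/2, 1/2))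
       \<and> (B > 2 \<longrightarrow>
            (\<exists>!p. fst p \<in> {1/2<..<1} \<and> snd p \<in> {1/2<..<1} \<and>
                  exp (B * sqrt k * (1 - 2 * snd p)) = (1 - fst p) / fst p \<and>
                  exp ((B / sqrt k) * (1 - 2 * fst p)) = (1 - snd p) / snd p)
          \<and> (\<forall>p. fst p \<in> {1/2<..<1} \<and> snd p \<in> {1/2<..<1} \<and>
                  exp (B * sqrt k * (1 - 2 * snd p)) = (1 - fst p) / fst p \<and>
                  exp ((B / sqrt k) * (1 - 2 * fst p)) = (1 - snd p) / snd p
                \<longrightarrow> fixed_points (Fmap B k) = {p} \<and> jacobian_attractive (Fmap B k) p))"
proof -
  have "0 < k"
    using assms(1) by simp
  note cases = fixed_points_cases[OF \<open>0 < B\<close> \<open>0 < k\<close>]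
  have gt_2: "2 < B" if "fixed_point_system B k p" for p
    using fixed_point_system_gt_2[OF \<open>0 < B\<close> \<open>0 < k\<close>, of "fst p" "snd p"] that by simp
  have subcritical: "fixed_points (Fmap B k) = {(1/2, 1/2)}" if "B < 2"
    using cases gt_2 center_fixed_point[of B k] that by fastforce
  have supercritical: "fixed_points (Fmap B k) = {p} \<and> jacobian_attractive (Fmap B k) p"
    if "2 < B" "fixed_point_system B k p" for p
  proof -
    obtain aL aR where p: "p = (aL, aR)" by fastforce
    have "q = p" if "q \<in> fixed_points (Fmap B k)" for q
      using cases[OF that] fixed_point_system_ex1[OF \<open>2 < B\<close> \<open>0 < k\<close>]
        \<open>fixed_point_system B k p\<close> \<open>2 < B\<close> by auto
    then show ?thesis
      using fixed_point_system_fixed_point[OF \<open>0 < B\<close> \<open>0 < k\<close> \<open>fixed_point_system B k p\<close>]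
        jacobian_attractive_supercritical[OF \<open>0 < B\<close> \<open>0 < k\<close>
          fixed_point_system_supercritical[OF \<open>0 < B\<close> \<open>0 < k\<close>]]
        \<open>fixed_point_system B k p\<close> unfolding p by blast
  qed
  show ?thesis
    using subcritical jacobian_attractive_center[of B k] supercritical
      fixed_point_system_ex1[OF _ \<open>0 < k\<close>]
    unfolding fixed_point_system_def by blast
qed

end
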